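(* In the linear model described in the context, for all $\alpha\in[0,1]$ a minimizer of $\mathcal R(f)$ subject to $\mathcal U(f)\le\alpha\,\mathcal U(f^* )$ is given for all $(\boldsymbol x,s)\in\mathbb R^p\times[K]$ by $$f^*_\alpha(\boldsymbol x,s)=\langle\boldsymbol x,\boldsymbol\beta^*\rangle+\sqrt\alpha\,b^*_s+(1-\sqrt\alpha)\sum_{s'=1}^Kw_{s'}b^*_{s'}.$$
   Context: Model: $Y=\langle\boldsymbol X,\boldsymbol\beta^*\rangle+b^*_S+\xi$ with $\boldsymbol\beta^*\in\mathbb R^p$, $\boldsymbol b^*\in\mathbb R^K$, $\boldsymbol X\sim\mathcal N(\boldsymbol0,\boldsymbol\Sigma)$, $\boldsymbol\Sigma$ symmetric positive definite, $\boldsymbol X$ independent of $S\in[K]$, $\xi\sim\mathcal N(0,\sigma^2)$ independent; $f^*(\boldsymbol x,s)=\langle\boldsymbol x,\boldsymbol\beta^*\rangle+b^*_s$. Weights $\boldsymbol w\in\Delta^{K-1}$. $\mathcal R(f)=\sum_sw_s\mathbb E(f^*(\boldsymbol X,s)-f(\boldsymbol X,s))^2$ and $\mathcal U(f)=\min_{\nu\in\mathcal P_2(\mathbb R)}\sum_sw_s\mathsf W_2^2(\mathrm{Law}(f(\boldsymbol X,s)),\nu)$, with $\boldsymbol X\sim\mathcal N(\boldsymbol0,\boldsymbol\Sigma)$ and $\mathsf W_2$ the Wasserstein-2 distance. *)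

theory Defs
  imports "HOL-Probability.Probability"
begin

text \<open>Centered multivariate Gaussian law with covariance matrix Sig on real^'p,
  defined via one-dimensional projections (Cramer--Wold): every linear functional
  x \<mapsto> v\<bullet>x is N(0, v\<bullet>(Sig v)) (degenerate at 0 if the variance is 0).\<close>
definition gaussian_measure :: "(real^'p) measure \<Rightarrow> real^'p^'p \<Rightarrow> bool" where
  "gaussian_measure M Sig \<longleftrightarrow> prob_space M \<and> sets M = sets borel \<and>
     (\<forall>v. distr M borel (\<lambda>x. v \<bullet> x) =
        (if v \<bullet> (Sig *v v) = 0 then return borel 0
         else density lborel (normal_density 0 (sqrt (v \<bullet> (Sig *v v))))))"

definition couplings :: "real measure \<Rightarrow> real measure \<Rightarrow> (real \<times> real) measure set" where
  "couplings M N = {P. prob_space P \<and> sets P = sets (borel \<Otimes>\<^sub>M borel) \<and>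
      distr P borel fst = M \<and> distr P borel snd = N}"

definition W2sq :: "real measure \<Rightarrow> real measure \<Rightarrow> ennreal" where
  "W2sq M N = (INF P\<in>couplings M N. \<integral>\<^sup>+ z. ennreal ((fst z - snd z)^2) \<partial>P)"

definition P2 :: "real measure set" where
  "P2 = {N. prob_space N \<and> sets N = sets borel \<and> (\<integral>\<^sup>+ x. ennreal (x^2) \<partial>N) < \<infinity>}"

definition risk :: "(real^'p) measure \<Rightarrow> ('k::finite \<Rightarrow> real) \<Rightarrow>
     (real^'p \<Rightarrow> 'k \<Rightarrow> real) \<Rightarrow> (real^'p \<Rightarrow> 'k \<Rightarrow> real) \<Rightarrow> ennreal" where
  "risk M w fs f = (\<Sum>s\<in>UNIV. ennreal (w s) * (\<integral>\<^sup>+ x. ennreal ((fs x s - f x s)^2) \<partial>M))"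

definition unfairness :: "(real^'p) measure \<Rightarrow> ('k::finite \<Rightarrow> real) \<Rightarrow>
     (real^'p \<Rightarrow> 'k \<Rightarrow> real) \<Rightarrow> ennreal" where
  "unfairness M w f = (INF N\<in>P2. \<Sum>s\<in>UNIV. ennreal (w s) * W2sq (distr M borel (\<lambda>x. f x s)) N)"

end

theory Submission
  imports Defs
begin

(* The risk and the unfairness constraint both control the group means m s = E f(X, s).
  Jensen's inequality applied to a coupling shows that W2^2 between two laws is at least the
  squared difference of their means, so U(f) is at least the w-weighted variance of m; coupling
  through a common X shows that U(g + c) is exactly the weighted variance of the offsets c
  whenever g(X) has a finite second moment.  Likewise R(f) >= sum_s w_s (E f*(X, s) - m s)^2.
  The square root of the weighted variance is a seminorm, so Var_w(m) <= alpha Var_w(b) forces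
  that sum to be at least (1 - sqrt alpha)^2 Var_w(b), which is the risk of f*_alpha, whose
  offsets shrink b towards its weighted mean by the factor sqrt alpha. *)

definition weighted_mean :: "('k::finite \<Rightarrow> real) \<Rightarrow> ('k \<Rightarrow> real) \<Rightarrow> real" where
  "weighted_mean w m = (\<Sum>s\<in>UNIV. w s * m s)"

definition weighted_var :: "('k::finite \<Rightarrow> real) \<Rightarrow> ('k \<Rightarrow> real) \<Rightarrow> real" where
  "weighted_var w m = (\<Sum>s\<in>UNIV. w s * (m s - weighted_mean w m)\<^sup>2)"

lemma weighted_mean_add:
  "weighted_mean w (\<lambda>s. p s + q s) = weighted_mean w p + weighted_mean w q"
  by (simp add: weighted_mean_def distrib_left sum.distrib)

lemma weighted_mean_affine:
  assumes "(\<Sum>s\<in>UNIV. w s) = 1"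
  shows "weighted_mean w (\<lambda>s. a * m s + k) = a * weighted_mean w m + k"
proof -
  have "(\<Sum>s\<in>UNIV. w s * (a * m s + k)) = a * (\<Sum>s\<in>UNIV. w s * m s) + k * (\<Sum>s\<in>UNIV. w s)"
    by (simp add: algebra_simps sum.distrib sum_distrib_left)
  then show ?thesis
    using assms by (simp add: weighted_mean_def)
qed

lemma weighted_var_affine:
  assumes "(\<Sum>s\<in>UNIV. w s) = 1"
  shows "weighted_var w (\<lambda>s. a * m s + k) = a\<^sup>2 * weighted_var w m"
proof -
  have "(a * m s + k - (a * weighted_mean w m + k))\<^sup>2 = a\<^sup>2 * (m s - weighted_mean w m)\<^sup>2" for s
    by (simp add: power2_eq_square algebra_simps)
  then show ?thesis
    unfolding weighted_var_def weighted_mean_affine[OF assms]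
    by (simp add: sum_distrib_left algebra_simps)
qed

lemma weighted_var_nonneg: "\<forall>s. 0 \<le> w s \<Longrightarrow> 0 \<le> weighted_var w m"
  by (simp add: weighted_var_def sum_nonneg)

lemma weighted_sq_deviation_eq:
  assumes "(\<Sum>s\<in>UNIV. w s) = 1"
  shows "(\<Sum>s\<in>UNIV. w s * (m s - n)\<^sup>2) = weighted_var w m + (weighted_mean w m - n)\<^sup>2"
proof -
  let ?mu = "weighted_mean w m"
  have "w s * (m s - n)\<^sup>2
      = w s * (m s - ?mu)\<^sup>2 + 2 * (?mu - n) * (w s * m s) - 2 * (?mu - n) * ?mu * w s
        + (?mu - n)\<^sup>2 * w s" for s
    by (simp add: power2_eq_square algebra_simps)
  then show ?thesis
    using assms
    by (simp add: weighted_var_def sum.distrib sum_subtractf flip: sum_distrib_left sum_distrib_right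
        weighted_mean_def)
qed

lemma sqrt_weighted_var_eq_L2_set:
  assumes "\<forall>s. 0 \<le> w s"
  shows "sqrt (weighted_var w m) = L2_set (\<lambda>s. sqrt (w s) * (m s - weighted_mean w m)) UNIV"
  using assms by (simp add: L2_set_def weighted_var_def power_mult_distrib)

lemma sqrt_weighted_var_add_le:
  assumes "\<forall>s. 0 \<le> w s"
  shows "sqrt (weighted_var w (\<lambda>s. p s + q s)) \<le> sqrt (weighted_var w p) + sqrt (weighted_var w q)"
  using L2_set_triangle_ineq[of "\<lambda>s. sqrt (w s) * (p s - weighted_mean w p)"
      "\<lambda>s. sqrt (w s) * (q s - weighted_mean w q)" UNIV]
  by (simp add: sqrt_weighted_var_eq_L2_set[OF assms] weighted_mean_add algebra_simps)

lemma sum_sq_diff_ge_of_weighted_var_le: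
  assumes w0: "\<forall>s. 0 \<le> w s" and w1: "(\<Sum>s\<in>UNIV. w s) = 1"
    and "0 \<le> alpha" and "alpha \<le> 1"
    and le: "weighted_var w q \<le> alpha * weighted_var w p"
  shows "(1 - sqrt alpha)\<^sup>2 * weighted_var w p \<le> (\<Sum>s\<in>UNIV. w s * (p s - q s)\<^sup>2)"
proof -
  have "sqrt (weighted_var w q) \<le> sqrt alpha * sqrt (weighted_var w p)"
    using le by (metis real_sqrt_le_mono real_sqrt_mult)
  moreover have "sqrt (weighted_var w p) \<le> sqrt (weighted_var w (\<lambda>s. p s - q s)) + sqrt (weighted_var w q)"
    using sqrt_weighted_var_add_le[OF w0, of "\<lambda>s. p s - q s" q] by simp
  ultimately have "(1 - sqrt alpha) * sqrt (weighted_var w p) \<le> sqrt (weighted_var w (\<lambda>s. p s - q s))"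
    by (simp add: algebra_simps)
  moreover have "0 \<le> (1 - sqrt alpha) * sqrt (weighted_var w p)"
    using assms weighted_var_nonneg[OF w0] by simp
  ultimately have "((1 - sqrt alpha) * sqrt (weighted_var w p))\<^sup>2
      \<le> (sqrt (weighted_var w (\<lambda>s. p s - q s)))\<^sup>2"
    by (rule power_mono)
  then have "(1 - sqrt alpha)\<^sup>2 * weighted_var w p \<le> weighted_var w (\<lambda>s. p s - q s)"
    by (simp add: power_mult_distrib weighted_var_nonneg[OF w0])
  also have "\<dots> \<le> (\<Sum>s\<in>UNIV. w s * (p s - q s)\<^sup>2)"
    using weighted_sq_deviation_eq[OF w1, of "\<lambda>s. p s - q s" 0] by simp
  finally show ?thesis .
qed

definition shrink_offsets :: "real \<Rightarrow> ('k::finite \<Rightarrow> real) \<Rightarrow> ('k \<Rightarrow> real) \<Rightarrow> 'k \<Rightarrow> real" where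
  "shrink_offsets alpha w b s = sqrt alpha * b s + (1 - sqrt alpha) * weighted_mean w b"

lemma weighted_var_shrink_offsets:
  assumes "(\<Sum>s\<in>UNIV. w s) = 1" and "0 \<le> alpha"
  shows "weighted_var w (shrink_offsets alpha w b) = alpha * weighted_var w b"
  using weighted_var_affine[OF assms(1), of "sqrt alpha" b] assms(2)
  by (simp add: shrink_offsets_def[abs_def])

lemma sum_sq_diff_shrink_offsets:
  "(\<Sum>s\<in>UNIV. w s * (b s - shrink_offsets alpha w b s)\<^sup>2) = (1 - sqrt alpha)\<^sup>2 * weighted_var w b"
proof -
  have diff: "b s - shrink_offsets alpha w b s = (1 - sqrt alpha) * (b s - weighted_mean w b)" for s
    by (simp add: shrink_offsets_def algebra_simps)
  show ?thesis
    unfolding diff weighted_var_def power_mult_distrib sum_distrib_left by (simp add: algebra_simps)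
qed

lemma (in prob_space) square_expectation_le:
  assumes [measurable]: "D \<in> borel_measurable M"
  shows "ennreal ((expectation D)\<^sup>2) \<le> (\<integral>\<^sup>+x. ennreal ((D x)\<^sup>2) \<partial>M)"
proof (cases "integrable M (\<lambda>x. (D x)\<^sup>2)")
  case True
  then have "integrable M D"
    by (rule square_integrable_imp_integrable[OF assms])
  then have "(expectation D)\<^sup>2 \<le> expectation (\<lambda>x. (D x)\<^sup>2)"
    using variance_eq[OF _ True] variance_positive[of D] by simp
  then have "ennreal ((expectation D)\<^sup>2) \<le> ennreal (expectation (\<lambda>x. (D x)\<^sup>2))"
    by (rule ennreal_leI)
  also have "\<dots> = (\<integral>\<^sup>+x. ennreal ((D x)\<^sup>2) \<partial>M)"
    using True by (simp add: nn_integral_eq_integral)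
  finally show ?thesis .
next
  case False
  then have "\<infinity> \<le> (\<integral>\<^sup>+x. ennreal ((D x)\<^sup>2) \<partial>M)"
    by (simp add: integrable_iff_bounded not_less)
  then show ?thesis
    by (simp add: top_unique)
qed

lemma (in prob_space) square_expectation_diff_le:
  assumes [measurable]: "Y \<in> borel_measurable M" and Z: "integrable M Z"
  shows "ennreal ((expectation Y - expectation Z)\<^sup>2) \<le> (\<integral>\<^sup>+x. ennreal ((Y x - Z x)\<^sup>2) \<partial>M)"
proof (cases "integrable M (\<lambda>x. (Y x - Z x)\<^sup>2)")
  case True
  have [measurable]: "Z \<in> borel_measurable M"
    using Z by blast
  have "integrable M (\<lambda>x. Y x - Z x)"
    by (rule square_integrable_imp_integrable[OF _ True]) measurable
  then have "integrable M (\<lambda>x. (Y x - Z x) + Z x)"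
    using Z by (rule Bochner_Integration.integrable_add)
  then have "expectation Y - expectation Z = expectation (\<lambda>x. Y x - Z x)"
    using Z by simp
  then show ?thesis
    by (simp add: square_expectation_le)
next
  case False
  then have "\<infinity> \<le> (\<integral>\<^sup>+x. ennreal ((Y x - Z x)\<^sup>2) \<partial>M)"
    using borel_measurable_integrable[OF Z] by (simp add: integrable_iff_bounded not_less)
  then show ?thesis
    by (simp add: top_unique)
qed

lemma W2sq_ge_square_mean_diff:
  assumes "prob_space M" and F: "F \<in> borel_measurable M" and N: "N \<in> P2"
  shows "ennreal ((integral\<^sup>L M F - integral\<^sup>L N (\<lambda>y. y))\<^sup>2) \<le> W2sq (distr M borel F) N"
  unfolding W2sq_def
proof (rule INF_greatest)
  fix P assume "P \<in> couplings (distr M borel F) N"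
  then have "prob_space P" and sets_P: "sets P = sets (borel \<Otimes>\<^sub>M borel)"
    and fst_P: "distr P borel fst = distr M borel F" and snd_P: "distr P borel snd = N"
    unfolding couplings_def by auto
  interpret P: prob_space P by fact
  have [measurable]: "fst \<in> borel_measurable P" "snd \<in> borel_measurable P"
    using measurable_cong_sets[OF sets_P refl, of borel] by auto
  have "(\<integral>\<^sup>+z. ennreal ((snd z)\<^sup>2) \<partial>P) = (\<integral>\<^sup>+y. ennreal (y\<^sup>2) \<partial>N)"
    unfolding snd_P[symmetric] by (simp add: nn_integral_distr)
  with N have "integrable P (\<lambda>z. (snd z)\<^sup>2)"
    by (simp add: P2_def integrable_iff_bounded)
  then have "integrable P snd"
    by (rule P.square_integrable_imp_integrable[rotated]) measurable
  moreover have "integral\<^sup>L P fst = integral\<^sup>L M F"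
  proof -
    have "integral\<^sup>L P fst = integral\<^sup>L (distr P borel fst) (\<lambda>y. y)"
      by (rule integral_distr[symmetric]) simp_all
    also have "\<dots> = integral\<^sup>L M F"
      unfolding fst_P by (rule integral_distr[OF F]) simp
    finally show ?thesis .
  qed
  moreover have "integral\<^sup>L P snd = integral\<^sup>L N (\<lambda>y. y)"
    unfolding snd_P[symmetric] by (rule integral_distr[symmetric]) simp_all
  ultimately show "ennreal ((integral\<^sup>L M F - integral\<^sup>L N (\<lambda>y. y))\<^sup>2)
      \<le> (\<integral>\<^sup>+z. ennreal ((fst z - snd z)\<^sup>2) \<partial>P)"
    using P.square_expectation_diff_le[of fst snd] by simp
qed

lemma W2sq_distr_le:
  assumes "prob_space M" and [measurable]: "F \<in> borel_measurable M" "G \<in> borel_measurable M"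
  shows "W2sq (distr M borel F) (distr M borel G) \<le> (\<integral>\<^sup>+x. ennreal ((F x - G x)\<^sup>2) \<partial>M)"
proof -
  let ?P = "distr M (borel \<Otimes>\<^sub>M borel) (\<lambda>x. (F x, G x))"
  have "?P \<in> couplings (distr M borel F) (distr M borel G)"
    using prob_space.prob_space_distr[OF assms(1), of "\<lambda>x. (F x, G x)" "borel \<Otimes>\<^sub>M borel"]
    by (simp add: couplings_def distr_distr comp_def)
  then have "W2sq (distr M borel F) (distr M borel G) \<le> (\<integral>\<^sup>+z. ennreal ((fst z - snd z)\<^sup>2) \<partial>?P)"
    unfolding W2sq_def by (rule INF_lower)
  also have "\<dots> = (\<integral>\<^sup>+x. ennreal ((F x - G x)\<^sup>2) \<partial>M)"
    by (simp add: nn_integral_distr)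
  finally show ?thesis .
qed

lemma distr_in_P2:
  assumes "prob_space M" and "g \<in> borel_measurable M" and "integrable M (\<lambda>x. (g x)\<^sup>2)"
  shows "distr M borel g \<in> P2"
  using assms prob_space.prob_space_distr[OF assms(1,2)]
  by (simp add: P2_def nn_integral_distr integrable_iff_bounded)

lemma ennreal_sum_mult:
  assumes "\<And>s. s \<in> A \<Longrightarrow> 0 \<le> w s" and "\<And>s. s \<in> A \<Longrightarrow> 0 \<le> x s"
  shows "ennreal (\<Sum>s\<in>A. w s * x s) = (\<Sum>s\<in>A. ennreal (w s) * ennreal (x s))"
  using assms by (simp add: sum_ennreal[symmetric] ennreal_mult)

lemma unfairness_ge_weighted_var:
  fixes M :: "(real^'p) measure" and f :: "real^'p \<Rightarrow> 'k::finite \<Rightarrow> real"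
  assumes "prob_space M" and f: "\<And>s. (\<lambda>x. f x s) \<in> borel_measurable M"
    and w0: "\<forall>s. 0 \<le> w s" and w1: "(\<Sum>s\<in>UNIV. w s) = 1"
  shows "ennreal (weighted_var w (\<lambda>s. \<integral>x. f x s \<partial>M)) \<le> unfairness M w f"
  unfolding unfairness_def
proof (rule INF_greatest)
  fix N assume N: "N \<in> P2"
  define m where "m s = (\<integral>x. f x s \<partial>M)" for s
  define n where "n = integral\<^sup>L N (\<lambda>y. y)"
  have "ennreal (weighted_var w m) \<le> ennreal (\<Sum>s\<in>UNIV. w s * (m s - n)\<^sup>2)"
    by (rule ennreal_leI) (simp add: weighted_sq_deviation_eq[OF w1])
  also have "\<dots> = (\<Sum>s\<in>UNIV. ennreal (w s) * ennreal ((m s - n)\<^sup>2))"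
    using w0 by (simp add: ennreal_sum_mult)
  also have "\<dots> \<le> (\<Sum>s\<in>UNIV. ennreal (w s) * W2sq (distr M borel (\<lambda>x. f x s)) N)"
    unfolding m_def n_def
    by (intro sum_mono mult_left_mono W2sq_ge_square_mean_diff[OF assms(1) f N]) simp
  finally show "ennreal (weighted_var w (\<lambda>s. \<integral>x. f x s \<partial>M))
      \<le> (\<Sum>s\<in>UNIV. ennreal (w s) * W2sq (distr M borel (\<lambda>x. f x s)) N)"
    unfolding m_def .
qed

lemma unfairness_add_const:
  fixes M :: "(real^'p) measure" and g :: "real^'p \<Rightarrow> real" and c :: "'k::finite \<Rightarrow> real"
  assumes "prob_space M" and g [measurable]: "g \<in> borel_measurable M"
    and g2: "integrable M (\<lambda>x. (g x)\<^sup>2)"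
    and w0: "\<forall>s. 0 \<le> w s" and w1: "(\<Sum>s\<in>UNIV. w s) = 1"
  shows "unfairness M w (\<lambda>x s. g x + c s) = ennreal (weighted_var w c)"
proof (rule antisym)
  interpret prob_space M by fact
  have "integrable M g"
    by (rule square_integrable_imp_integrable[OF g g2])
  let ?k = "weighted_mean w c"
  have "(\<lambda>x. (g x + ?k)\<^sup>2) = (\<lambda>x. (g x)\<^sup>2 + 2 * ?k * g x + ?k\<^sup>2)"
    by (simp add: power2_eq_square algebra_simps)
  with g2 \<open>integrable M g\<close> have "integrable M (\<lambda>x. (g x + ?k)\<^sup>2)"
    by simp
  then have "distr M borel (\<lambda>x. g x + ?k) \<in> P2"
    by (intro distr_in_P2) (simp_all add: prob_space_axioms)
  then have "unfairness M w (\<lambda>x s. g x + c s)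
      \<le> (\<Sum>s\<in>UNIV. ennreal (w s) * W2sq (distr M borel (\<lambda>x. g x + c s)) (distr M borel (\<lambda>x. g x + ?k)))"
    unfolding unfairness_def by (rule INF_lower)
  also have "\<dots> \<le> (\<Sum>s\<in>UNIV. ennreal (w s) * (\<integral>\<^sup>+x. ennreal ((g x + c s - (g x + ?k))\<^sup>2) \<partial>M))"
    by (intro sum_mono mult_left_mono W2sq_distr_le) (simp_all add: prob_space_axioms)
  also have "\<dots> = ennreal (weighted_var w c)"
    using w0 by (simp add: weighted_var_def ennreal_sum_mult emeasure_space_1)
  finally show "unfairness M w (\<lambda>x s. g x + c s) \<le> ennreal (weighted_var w c)" .
  have "(\<integral>x. g x + c s \<partial>M) = c s + expectation g" for s
    using \<open>integrable M g\<close> by (simp add: prob_space)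
  then have "weighted_var w (\<lambda>s. \<integral>x. g x + c s \<partial>M) = weighted_var w c"
    using weighted_var_affine[OF w1, of 1 c "expectation g"] by simp
  then show "ennreal (weighted_var w c) \<le> unfairness M w (\<lambda>x s. g x + c s)"
    using unfairness_ge_weighted_var[OF prob_space_axioms _ w0 w1, of "\<lambda>x s. g x + c s"] by simp
qed

lemma risk_ge_weighted_sq_mean_diff:
  fixes M :: "(real^'p) measure" and fs f :: "real^'p \<Rightarrow> 'k::finite \<Rightarrow> real"
  assumes "prob_space M" and "\<forall>s. 0 \<le> w s"
    and "\<And>s. integrable M (\<lambda>x. fs x s)" and "\<And>s. (\<lambda>x. f x s) \<in> borel_measurable M"
  shows "ennreal (\<Sum>s\<in>UNIV. w s * ((\<integral>x. fs x s \<partial>M) - (\<integral>x. f x s \<partial>M))\<^sup>2) \<le> risk M w fs f"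
proof -
  have "ennreal (((\<integral>x. fs x s \<partial>M) - (\<integral>x. f x s \<partial>M))\<^sup>2) \<le> (\<integral>\<^sup>+x. ennreal ((fs x s - f x s)\<^sup>2) \<partial>M)"
    for s
    using prob_space.square_expectation_diff_le[OF assms(1,4,3), of s s]
    by (simp add: power2_commute)
  then show ?thesis
    using assms(2) unfolding risk_def
    by (simp add: ennreal_sum_mult sum_mono mult_left_mono)
qed

lemma risk_add_const:
  fixes M :: "(real^'p) measure" and g :: "real^'p \<Rightarrow> real" and b c :: "'k::finite \<Rightarrow> real"
  assumes "prob_space M" and "\<forall>s. 0 \<le> w s"
  shows "risk M w (\<lambda>x s. g x + b s) (\<lambda>x s. g x + c s) = ennreal (\<Sum>s\<in>UNIV. w s * (b s - c s)\<^sup>2)"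
  using assms by (simp add: risk_def prob_space.emeasure_space_1 ennreal_sum_mult)

lemma risk_ge_of_unfairness_le:
  fixes M :: "(real^'p) measure" and g :: "real^'p \<Rightarrow> real" and f :: "real^'p \<Rightarrow> 'k::finite \<Rightarrow> real"
  assumes M: "prob_space M" and g: "g \<in> borel_measurable M" and g2: "integrable M (\<lambda>x. (g x)\<^sup>2)"
    and w0: "\<forall>s. 0 \<le> w s" and w1: "(\<Sum>s\<in>UNIV. w s) = 1"
    and alpha: "0 \<le> alpha" "alpha \<le> 1"
    and f: "\<And>s. (\<lambda>x. f x s) \<in> borel_measurable M"
    and fair: "unfairness M w f \<le> ennreal alpha * unfairness M w (\<lambda>x s. g x + b s)"
  shows "ennreal ((1 - sqrt alpha)\<^sup>2 * weighted_var w b) \<le> risk M w (\<lambda>x s. g x + b s) f"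
proof -
  interpret prob_space M by (rule M)
  have "integrable M g"
    by (rule square_integrable_imp_integrable[OF g g2])
  then have mean_fs: "(\<integral>x. g x + b s \<partial>M) = b s + expectation g" for s
    by (simp add: prob_space)
  have "ennreal (weighted_var w (\<lambda>s. \<integral>x. f x s \<partial>M)) \<le> unfairness M w f"
    by (rule unfairness_ge_weighted_var[OF M f w0 w1])
  also have "\<dots> \<le> ennreal (alpha * weighted_var w b)"
    using fair unfairness_add_const[OF M g g2 w0 w1] alpha weighted_var_nonneg[OF w0]
    by (simp add: ennreal_mult)
  finally have "weighted_var w (\<lambda>s. \<integral>x. f x s \<partial>M) \<le> alpha * weighted_var w (\<lambda>s. \<integral>x. g x + b s \<partial>M)"
    using weighted_var_affine[OF w1, of 1 b] alpha weighted_var_nonneg[OF w0]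
    by (simp add: mean_fs ennreal_le_iff)
  from sum_sq_diff_ge_of_weighted_var_le[OF w0 w1 alpha this]
  have "ennreal ((1 - sqrt alpha)\<^sup>2 * weighted_var w b)
      \<le> ennreal (\<Sum>s\<in>UNIV. w s * ((\<integral>x. g x + b s \<partial>M) - (\<integral>x. f x s \<partial>M))\<^sup>2)"
    using weighted_var_affine[OF w1, of 1 b] by (simp add: mean_fs ennreal_leI)
  also have "\<dots> \<le> risk M w (\<lambda>x s. g x + b s) f"
    using \<open>integrable M g\<close> by (intro risk_ge_weighted_sq_mean_diff[OF M w0 _ f]) simp
  finally show ?thesis .
qed

lemma gaussian_measure_square_integrable:
  assumes "gaussian_measure M Sig"
  shows "integrable M (\<lambda>x. (v \<bullet> x)\<^sup>2)"
proof -
  have "prob_space M" and sets_M: "sets M = sets borel"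
    and law: "distr M borel (\<lambda>x. v \<bullet> x) =
      (if v \<bullet> (Sig *v v) = 0 then return borel 0
       else density lborel (normal_density 0 (sqrt (v \<bullet> (Sig *v v)))))"
    using assms unfolding gaussian_measure_def by auto
  have [measurable]: "(\<lambda>x. v \<bullet> x) \<in> borel_measurable M"
    unfolding measurable_cong_sets[OF sets_M refl] by measurable
  have "integrable (distr M borel (\<lambda>x. v \<bullet> x)) (\<lambda>y. y\<^sup>2)"
  proof (cases "v \<bullet> (Sig *v v) = 0")
    case True
    then show ?thesis
      using law by (simp add: integrable_iff_bounded nn_integral_return)
  next
    case False
    \<comment> \<open>No definiteness of Sig is assumed, so the square root may be negative;
      the normal density only depends on the square of its scale.\<close>
    define sigma where "sigma = \<bar>sqrt (v \<bullet> (Sig *v v))\<bar>"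
    have "0 < sigma"
      using False by (simp add: sigma_def)
    have "normal_density 0 (sqrt (v \<bullet> (Sig *v v))) = normal_density 0 sigma"
      by (simp add: sigma_def normal_density_def fun_eq_iff)
    then show ?thesis
      using False law integrable_normal_moment[OF \<open>0 < sigma\<close>, of 0 2]
      by (simp add: integrable_density)
  qed
  then show ?thesis
    by (simp add: integrable_distr_eq)
qed

theorem proposition5:
  fixes Sig :: "real^'p^'p" and M :: "(real^'p) measure" and beta :: "real^'p"
    and b w :: "'k::finite \<Rightarrow> real" and alpha :: real
  assumes "transpose Sig = Sig"
    and "\<forall>v. v \<noteq> 0 \<longrightarrow> 0 < v \<bullet> (Sig *v v)"
    and "gaussian_measure M Sig"
    and "\<forall>s. 0 \<le> w s" and "(\<Sum>s\<in>UNIV. w s) = 1"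
    and "0 \<le> alpha" and "alpha \<le> 1"
  shows "let fs = (\<lambda>x s. x \<bullet> beta + b s);
             fa = (\<lambda>x s. x \<bullet> beta + sqrt alpha * b s + (1 - sqrt alpha) * (\<Sum>s'\<in>UNIV. w s' * b s'))
         in (\<forall>s. (\<lambda>x. fa x s) \<in> borel_measurable borel)
          \<and> unfairness M w fa \<le> ennreal alpha * unfairness M w fs
          \<and> (\<forall>f. (\<forall>s. (\<lambda>x. f x s) \<in> borel_measurable borel) \<and>
                  unfairness M w f \<le> ennreal alpha * unfairness M w fs
                  \<longrightarrow> risk M w fs fa \<le> risk M w fs f)"
proof -
  note w0 = assms(4) and w1 = assms(5) and alpha = assms(6,7)
  define g where "g x = x \<bullet> beta" for x
  let ?c = "shrink_offsets alpha w b"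
  have M: "prob_space M" and sets_M: "sets M = sets borel"
    using assms(3) by (auto simp: gaussian_measure_def)
  have measurable_M: "measurable M borel = measurable borel (borel :: real measure)"
    by (rule measurable_cong_sets[OF sets_M refl])
  have g: "g \<in> borel_measurable M"
    unfolding measurable_M g_def by measurable
  have g2: "integrable M (\<lambda>x. (g x)\<^sup>2)"
    using gaussian_measure_square_integrable[OF assms(3), of beta] by (simp add: g_def inner_commute)
  have "unfairness M w (\<lambda>x s. g x + ?c s) = ennreal alpha * unfairness M w (\<lambda>x s. g x + b s)"
    using unfairness_add_const[OF M g g2 w0 w1] weighted_var_shrink_offsets[OF w1 alpha(1)]
      alpha weighted_var_nonneg[OF w0] by (simp add: ennreal_mult)
  moreover have "risk M w (\<lambda>x s. g x + b s) (\<lambda>x s. g x + ?c s) \<le> risk M w (\<lambda>x s. g x + b s) f"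
    if "\<forall>s. (\<lambda>x. f x s) \<in> borel_measurable borel"
      and "unfairness M w f \<le> ennreal alpha * unfairness M w (\<lambda>x s. g x + b s)" for f
    using risk_ge_of_unfairness_le[OF M g g2 w0 w1 alpha _ that(2)] that(1)
    by (simp add: risk_add_const[OF M w0] sum_sq_diff_shrink_offsets measurable_M)
  moreover have "\<forall>s. (\<lambda>x. g x + ?c s) \<in> borel_measurable borel"
    unfolding g_def by measurable
  moreover have "(\<lambda>x s. x \<bullet> beta + sqrt alpha * b s + (1 - sqrt alpha) * (\<Sum>s'\<in>UNIV. w s' * b s'))
      = (\<lambda>x s. g x + ?c s)" and "(\<lambda>x s. x \<bullet> beta + b s) = (\<lambda>x s. g x + b s)"
    by (simp_all add: g_def shrink_offsets_def weighted_mean_def add.assoc)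
  ultimately show ?thesis
    unfolding Let_def by simp
qed

end
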